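(* Let $\mathscr{P}=(P^j_{B_1'B_2'})_{j=1}^d$ be a projective measurement on finite-dimensional $\mathcal{H}_{B_1'}\otimes\mathcal{H}_{B_2'}$ and $\mathscr{F}=(F^j_{B_1B_2})_{j=1}^d$ a POVM on finite-dimensional $\mathcal{H}_{B_1}\otimes\mathcal{H}_{B_2}$. Then $Q(\mathscr{F},\mathscr{P})\le1$, and if $Q(\mathscr{F},\mathscr{P})=1$ then there exist completely positive unital maps $\Lambda_{B_1}:\mathcal{L}(\mathcal{H}_{B_1})\to\mathcal{L}(\mathcal{H}_{B_1'})$, $\Lambda_{B_2}:\mathcal{L}(\mathcal{H}_{B_2})\to\mathcal{L}(\mathcal{H}_{B_2'})$ such that $(\Lambda_{B_1}\otimes\Lambda_{B_2})(F^j_{B_1B_2})=P^j_{B_1'B_2'}$ for every $j$.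
   Context: $Q(\mathscr{F},\mathscr{P}):=\frac{1}{|B_1'||B_2'|}\max_{\Lambda_{B_1},\Lambda_{B_2}}\sum_{j=1}^d\operatorname{tr}\big[(\Lambda_{B_1}\otimes\Lambda_{B_2})(F^j_{B_1B_2})P^j_{B_1'B_2'}\big]$, maximized over completely positive unital maps $\Lambda_{B_i}:\mathcal{L}(\mathcal{H}_{B_i})\to\mathcal{L}(\mathcal{H}_{B_i'})$; $|X|$ is the dimension of $\mathcal{H}_X$. *)

theory Defs
  imports Complex_Main "Jordan_Normal_Form.Matrix"
begin

text \<open>Operators on finite-dimensional Hilbert spaces are represented by square complex
matrices (Jordan_Normal_Form); the Hilbert space H_X has dimension |X|, and the
tensor product of spaces of dimensions p and q is identified with dimension p*q via
the index map (a,c) maps to a*q+c (Kronecker convention).\<close>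

definition mtrace :: "complex mat \<Rightarrow> complex" where
  "mtrace A = (\<Sum>i<dim_row A. A $$ (i, i))"

definition adj :: "complex mat \<Rightarrow> complex mat" where
  "adj A = mat (dim_col A) (dim_row A) (\<lambda>(i, j). cnj (A $$ (j, i)))"

definition psd :: "nat \<Rightarrow> complex mat \<Rightarrow> bool" where
  "psd n A \<longleftrightarrow> A \<in> carrier_mat n n \<and> adj A = A \<and>
     (\<forall>v \<in> carrier_vec n. 0 \<le> Re ((A *\<^sub>v v) \<bullet>c v))"

definition kron :: "complex mat \<Rightarrow> complex mat \<Rightarrow> complex mat" where
  "kron A B = mat (dim_row A * dim_row B) (dim_col A * dim_col B)
     (\<lambda>(i, j). A $$ (i div dim_row B, j div dim_col B) * B $$ (i mod dim_row B, j mod dim_col B))"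

definition munit :: "nat \<Rightarrow> nat \<Rightarrow> nat \<Rightarrow> complex mat" where
  "munit n a b = mat n n (\<lambda>(i, j). if i = a \<and> j = b then 1 else 0)"

definition lin_map :: "nat \<Rightarrow> nat \<Rightarrow> (complex mat \<Rightarrow> complex mat) \<Rightarrow> bool" where
  "lin_map n m L \<longleftrightarrow>
     (\<forall>A \<in> carrier_mat n n. L A \<in> carrier_mat m m) \<and>
     (\<forall>A \<in> carrier_mat n n. \<forall>B \<in> carrier_mat n n. L (A + B) = L A + L B) \<and>
     (\<forall>c. \<forall>A \<in> carrier_mat n n. L (c \<cdot>\<^sub>m A) = c \<cdot>\<^sub>m L A)"

text \<open>(id_k \<otimes> L) applied to a k*n x k*n matrix viewed as a k x k block matrix
with n x n blocks.\<close>
definition block_apply :: "nat \<Rightarrow> nat \<Rightarrow> nat \<Rightarrow> (complex mat \<Rightarrow> complex mat) \<Rightarrow> complex mat \<Rightarrow> complex mat" where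
  "block_apply k n m L X = mat (k * m) (k * m)
     (\<lambda>(i, j). L (mat n n (\<lambda>(p, q). X $$ ((i div m) * n + p, (j div m) * n + q))) $$ (i mod m, j mod m))"

definition cp_map :: "nat \<Rightarrow> nat \<Rightarrow> (complex mat \<Rightarrow> complex mat) \<Rightarrow> bool" where
  "cp_map n m L \<longleftrightarrow> lin_map n m L \<and>
     (\<forall>k X. psd (k * n) X \<longrightarrow> psd (k * m) (block_apply k n m L X))"

definition cpu_map :: "nat \<Rightarrow> nat \<Rightarrow> (complex mat \<Rightarrow> complex mat) \<Rightarrow> bool" where
  "cpu_map n m L \<longleftrightarrow> cp_map n m L \<and> L (1\<^sub>m n) = 1\<^sub>m m"

text \<open>(L1 \<otimes> L2)(X) for X on C^(n1) \<otimes> C^(n2), defined by linear extension from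
matrix units: (L1 \<otimes> L2)(|a><b| \<otimes> |c><e|) = L1(|a><b|) \<otimes> L2(|c><e|).\<close>
definition tensor_map :: "nat \<Rightarrow> nat \<Rightarrow> nat \<Rightarrow> nat \<Rightarrow> (complex mat \<Rightarrow> complex mat) \<Rightarrow>
    (complex mat \<Rightarrow> complex mat) \<Rightarrow> complex mat \<Rightarrow> complex mat" where
  "tensor_map n1 n2 m1 m2 L1 L2 X = mat (m1 * m2) (m1 * m2) (\<lambda>(i, j).
     \<Sum>a<n1. \<Sum>b<n1. \<Sum>c<n2. \<Sum>e<n2.
       X $$ (a * n2 + c, b * n2 + e) * kron (L1 (munit n1 a b)) (L2 (munit n2 c e)) $$ (i, j))"

definition msum :: "nat \<Rightarrow> nat \<Rightarrow> (nat \<Rightarrow> complex mat) \<Rightarrow> complex mat" where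
  "msum N d F = mat N N (\<lambda>(i, j). \<Sum>k<d. F k $$ (i, j))"

definition povm :: "nat \<Rightarrow> nat \<Rightarrow> (nat \<Rightarrow> complex mat) \<Rightarrow> bool" where
  "povm N d F \<longleftrightarrow> (\<forall>j<d. psd N (F j)) \<and> msum N d F = 1\<^sub>m N"

definition projective_measurement :: "nat \<Rightarrow> nat \<Rightarrow> (nat \<Rightarrow> complex mat) \<Rightarrow> bool" where
  "projective_measurement N d P \<longleftrightarrow> povm N d P \<and> (\<forall>j<d. P j * P j = P j)"

text \<open>Q(F,P); the max over CPU maps is written as a supremum.\<close>
definition Qval :: "nat \<Rightarrow> nat \<Rightarrow> nat \<Rightarrow> nat \<Rightarrow> nat \<Rightarrow> (nat \<Rightarrow> complex mat) \<Rightarrow> (nat \<Rightarrow> complex mat) \<Rightarrow> real" where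
  "Qval n1 n2 m1 m2 d F P = (1 / (real m1 * real m2)) *
     Sup {Re (\<Sum>j<d. mtrace (tensor_map n1 n2 m1 m2 L1 L2 (F j) * P j)) | L1 L2.
            cpu_map n1 m1 L1 \<and> cpu_map n2 m2 L2}"

end

theory Submission
  imports Defs
begin

text \<open>
  For CPU maps L1, L2 the operators A_j = (L1 \<otimes> L2)(F_j) again form a POVM: L1 \<otimes> L2 is
  unital, and it is positive because it factors as (L1 \<otimes> id) \<circ> (id \<otimes> L2), where
  id \<otimes> L is positive by complete positivity and L \<otimes> id is id \<otimes> L conjugated by the flip
  of the tensor factors. For a POVM A and a projective measurement P in dimension N the
  overlaps tr (A_j P_k) are nonnegative and add up to tr (\<Sum>_j A_j) = N, so
  \<Sum>_j tr (A_j P_j) \<le> N, which is Q \<le> 1. If equality holds, every overlap with k \<noteq> j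
  vanishes, which for positive A_j and projections P_k means A_j P_k = 0; hence
  A_j = A_j \<Sum>_k P_k = A_j P_j = (\<Sum>_k A_k) P_j = P_j.
  Since Q is defined as a supremum, the case Q = 1 needs the supremum to be attained. It is,
  because CPU maps form a compact set: their values on matrix units are bounded via the Choi
  matrix, and complete positivity and unitality pass to entrywise limits.
\<close>

lemma index_pair_less: "a < k \<Longrightarrow> i < m \<Longrightarrow> a * m + i < k * (m::nat)"
proof -
  assume "a < k" "i < m"
  then have "a * m + i < (a + 1) * m" by simp
  also have "\<dots> \<le> k * m" using \<open>a < k\<close> by (intro mult_right_mono) auto
  finally show ?thesis .
qed

lemma sum_lessThan_mult:
  fixes f :: "nat \<Rightarrow> 'a::comm_monoid_add"
  shows "(\<Sum>x<k * m. f x) = (\<Sum>a<k. \<Sum>i<m. f (a * m + i))"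
proof -
  have "(\<Sum>x \<in> {a * m..<a * m + m}. f x) = (\<Sum>i<m. f (a * m + i))" for a
    using sum.shift_bounds_nat_ivl[of f 0 "a * m" m] by (simp add: lessThan_atLeast0 add.commute)
  then show ?thesis
    using sum.nat_group[of f m k] by simp
qed

lemma sum_indicator_mult:
  fixes f :: "nat \<Rightarrow> 'a::semiring_1"
  shows "(\<Sum>b<n. (if a = b then 1 else 0) * f b) = (if a < n then f a else 0)"
  by (induction n) (auto simp: less_Suc_eq)

lemma sum_indicator2_mult:
  fixes f :: "nat \<Rightarrow> nat \<Rightarrow> 'a::semiring_1"
  shows "(\<Sum>c<n. \<Sum>e<n. (if c = a \<and> e = b then 1 else 0) * f c e) = (if a < n \<and> b < n then f a b else 0)"
proof -
  have "(if c = a \<and> e = b then 1 else 0) * f c e = (if a = c then 1 else 0) * ((if b = e then 1 else 0) * f c e)"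
    for c e
    by simp
  then show ?thesis
    by (simp add: sum_distrib_left[symmetric] sum_indicator_mult)
qed

lemma mult_mat_index:
  "A \<in> carrier_mat N K \<Longrightarrow> B \<in> carrier_mat K M \<Longrightarrow> i < N \<Longrightarrow> j < M \<Longrightarrow>
   (A * B) $$ (i, j) = (\<Sum>k<K. A $$ (i, k) * B $$ (k, j))"
  by (simp add: scalar_prod_def lessThan_atLeast0)

lemma mtrace_mult:
  assumes "A \<in> carrier_mat N N" "B \<in> carrier_mat N N"
  shows "mtrace (A * B) = (\<Sum>i<N. \<Sum>k<N. A $$ (i, k) * B $$ (k, i))"
  unfolding mtrace_def using assms mult_mat_index[OF assms] by simp

lemma kron_index:
  "i < dim_row A * dim_row B \<Longrightarrow> j < dim_col A * dim_col B \<Longrightarrow>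
   kron A B $$ (i, j) = A $$ (i div dim_row B, j div dim_col B) * B $$ (i mod dim_row B, j mod dim_col B)"
  unfolding kron_def by simp

lemma kron_one: "kron (1\<^sub>m p) (1\<^sub>m q) = 1\<^sub>m (p * q)"
proof (rule eq_matI)
  fix x y assume "x < dim_row (1\<^sub>m (p * q) :: complex mat)" "y < dim_col (1\<^sub>m (p * q) :: complex mat)"
  then have xy: "x < p * q" "y < p * q" by simp_all
  then have "0 < q" by (cases q) auto
  moreover have "x = y \<longleftrightarrow> x div q = y div q \<and> x mod q = y mod q"
    by (metis div_mult_mod_eq)
  ultimately show "kron (1\<^sub>m p) (1\<^sub>m q) $$ (x, y) = 1\<^sub>m (p * q) $$ (x, y)"
    using xy by (simp add: kron_index less_mult_imp_div_less)
qed (simp_all add: kron_def)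

section \<open>Positive semidefinite matrices\<close>

text \<open>The predicate psd is phrased with vectors; on coordinate functions the form
  x^* A y is more convenient.\<close>
definition sform :: "nat \<Rightarrow> complex mat \<Rightarrow> (nat \<Rightarrow> complex) \<Rightarrow> (nat \<Rightarrow> complex) \<Rightarrow> complex" where
  "sform N A x y = (\<Sum>i<N. \<Sum>k<N. cnj (x i) * A $$ (i, k) * y k)"

abbreviation qform :: "nat \<Rightarrow> complex mat \<Rightarrow> (nat \<Rightarrow> complex) \<Rightarrow> complex" where
  "qform N A x \<equiv> sform N A x x"

lemma mult_mat_vec_cscalar_prod_eq_qform:
  assumes "A \<in> carrier_mat N N" "v \<in> carrier_vec N"
  shows "(A *\<^sub>v v) \<bullet>c v = qform N A (\<lambda>i. v $ i)"
  using assms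
  by (simp add: sform_def scalar_prod_def lessThan_atLeast0 sum_distrib_left sum_distrib_right)
    (simp add: mult_ac)

lemma sform_cong:
  "(\<And>i. i < N \<Longrightarrow> x i = x' i) \<Longrightarrow> (\<And>i. i < N \<Longrightarrow> y i = y' i) \<Longrightarrow> sform N A x y = sform N A x' y'"
  unfolding sform_def by (intro sum.cong refl) auto

lemma psd_iff_qform:
  "psd N A \<longleftrightarrow> A \<in> carrier_mat N N \<and> adj A = A \<and> (\<forall>x. 0 \<le> Re (qform N A x))"
proof -
  have "(\<forall>v \<in> carrier_vec N. 0 \<le> Re ((A *\<^sub>v v) \<bullet>c v)) \<longleftrightarrow> (\<forall>x. 0 \<le> Re (qform N A x))"
    if A: "A \<in> carrier_mat N N"
  proof (intro iffI allI ballI)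
    fix x
    assume "\<forall>v \<in> carrier_vec N. 0 \<le> Re ((A *\<^sub>v v) \<bullet>c v)"
    then have "0 \<le> Re (qform N A (\<lambda>i. vec N x $ i))"
      using mult_mat_vec_cscalar_prod_eq_qform[OF A vec_carrier] vec_carrier by metis
    then show "0 \<le> Re (qform N A x)"
      using sform_cong[of N "\<lambda>i. vec N x $ i" x "\<lambda>i. vec N x $ i" x] by simp
  next
    fix v :: "complex vec"
    assume "\<forall>x. 0 \<le> Re (qform N A x)" "v \<in> carrier_vec N"
    then show "0 \<le> Re ((A *\<^sub>v v) \<bullet>c v)"
      using mult_mat_vec_cscalar_prod_eq_qform[OF A] by metis
  qed
  then show ?thesis
    unfolding psd_def by blast
qed

lemma adj_eq_iff:
  assumes "A \<in> carrier_mat N N"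
  shows "adj A = A \<longleftrightarrow> (\<forall>i<N. \<forall>j<N. cnj (A $$ (j, i)) = A $$ (i, j))"
  using assms unfolding adj_def by (auto simp: mat_eq_iff)

lemma psd_carrier: "psd N A \<Longrightarrow> A \<in> carrier_mat N N"
  unfolding psd_def by simp

lemma psd_hermitian: "psd N A \<Longrightarrow> i < N \<Longrightarrow> j < N \<Longrightarrow> A $$ (j, i) = cnj (A $$ (i, j))"
  unfolding psd_def using adj_eq_iff complex_cnj_cnj by metis

lemma psd_qform_nonneg: "psd N A \<Longrightarrow> 0 \<le> Re (qform N A x)"
  unfolding psd_iff_qform by simp

lemma sform_swap:
  assumes "psd N A"
  shows "sform N A y x = cnj (sform N A x y)"
proof -
  have "cnj (sform N A x y) = (\<Sum>i<N. \<Sum>k<N. x i * cnj (A $$ (i, k)) * cnj (y k))"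
    unfolding sform_def by simp
  also have "\<dots> = (\<Sum>i<N. \<Sum>k<N. cnj (y k) * A $$ (k, i) * x i)"
  proof (intro sum.cong refl)
    fix i k assume "i \<in> {..<N}" "k \<in> {..<N}"
    then show "x i * cnj (A $$ (i, k)) * cnj (y k) = cnj (y k) * A $$ (k, i) * x i"
      using psd_hermitian[OF assms, of i k] by (simp add: mult_ac)
  qed
  also have "\<dots> = sform N A y x"
    unfolding sform_def by (rule sum.swap)
  finally show ?thesis by simp
qed

lemma qform_add_scaled:
  "qform N A (\<lambda>k. x k + c * w k) =
     qform N A x + c * sform N A x w + cnj c * sform N A w x + cnj c * c * qform N A w"
  unfolding sform_def by (simp add: algebra_simps sum.distrib sum_distrib_left)

lemma sform_indicator:
  assumes "p < N" "q < N"
  shows "sform N A (\<lambda>k. if k = p then a else 0) (\<lambda>k. if k = q then b else 0) = cnj a * A $$ (p, q) * b"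
proof -
  have "cnj (if i = p then a else 0) * A $$ (i, k) * (if k = q then b else 0) =
      (if k = q then if i = p then cnj a * A $$ (p, q) * b else 0 else 0)" for i k
    by simp
  then show ?thesis
    using assms by (simp add: sform_def sum.delta)
qed

lemma psd_diag_nonneg: "psd N A \<Longrightarrow> p < N \<Longrightarrow> 0 \<le> Re (A $$ (p, p))"
  using psd_qform_nonneg[of N A "\<lambda>k. if k = p then 1 else 0"] by (simp add: sform_indicator)

lemma psd_entry_bound:
  assumes A: "psd N A" and pq: "p < N" "q < N"
  shows "cmod (A $$ (p, q)) \<le> Re (A $$ (p, p)) + Re (A $$ (q, q))"
proof -
  define z where "z = A $$ (p, q)"
  define s where "s = Re (A $$ (p, p)) + Re (A $$ (q, q))"
  let ?e = "\<lambda>r k. if k = r then 1 else (0::complex)"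
  have "0 \<le> s + 2 * Re (u * z)" if u: "cnj u * u = 1" for u
  proof -
    have "0 \<le> Re (qform N A (\<lambda>k. ?e p k + u * ?e q k))"
      by (rule psd_qform_nonneg[OF A])
    also have "\<dots> = Re (A $$ (p, p) + u * z + cnj (u * z) + A $$ (q, q))"
      using psd_hermitian[OF A pq] pq u unfolding qform_add_scaled
      by (simp add: sform_indicator z_def)
    also have "\<dots> = s + 2 * Re (u * z)" unfolding s_def by simp
    finally show ?thesis .
  qed
  from this[of 1] this[of "-1"] this[of \<i>] this[of "-\<i>"]
  have "\<bar>Re z\<bar> + \<bar>Im z\<bar> \<le> s" by simp
  then show ?thesis using cmod_le[of z] unfolding z_def s_def by linarith
qed

text \<open>Expanding (x - t A x)^* A (x - t A x) \<ge> 0 gives t (t (Ax)^* A (Ax) - 2 |Ax|^2) \<ge> 0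
  for all real t, which forces A x = 0.\<close>
lemma psd_qform_eq_0_imp_mult_eq_0:
  assumes A: "psd N A" and x: "Re (qform N A x) = 0" and i: "i < N"
  shows "(\<Sum>k<N. A $$ (i, k) * x k) = 0"
proof -
  define w where "w i = (\<Sum>k<N. A $$ (i, k) * x k)" for i
  define \<sigma> where "\<sigma> = (\<Sum>i<N. (cmod (w i))\<^sup>2)"
  define \<gamma> where "\<gamma> = Re (qform N A w)"
  have wx: "sform N A w x = \<sigma>"
  proof -
    have "sform N A w x = (\<Sum>i<N. cnj (w i) * (\<Sum>k<N. A $$ (i, k) * x k))"
      unfolding sform_def by (simp add: sum_distrib_left mult.assoc)
    also have "\<dots> = (\<Sum>i<N. w i * cnj (w i))"
      by (simp add: w_def mult.commute)
    also have "\<dots> = \<sigma>"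
      by (simp only: \<sigma>_def of_real_sum complex_norm_square)
    finally show ?thesis .
  qed
  have xw: "sform N A x w = \<sigma>"
    using sform_swap[OF A, of x w] by (simp add: wx)
  have quadratic: "0 \<le> t * (t * \<gamma> - 2 * \<sigma>)" for t :: real
  proof -
    have "0 \<le> Re (qform N A (\<lambda>k. x k + complex_of_real (- t) * w k))"
      by (rule psd_qform_nonneg[OF A])
    also have "\<dots> = t * (t * \<gamma> - 2 * \<sigma>)"
      unfolding qform_add_scaled wx xw using x by (simp add: \<gamma>_def algebra_simps)
    finally show ?thesis .
  qed
  have "\<sigma> = 0"
  proof (rule ccontr)
    assume "\<sigma> \<noteq> 0"
    moreover have "0 \<le> \<sigma>"
      unfolding \<sigma>_def by (simp add: sum_nonneg)
    ultimately have "0 < \<sigma>" by simp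
    have "0 \<le> \<gamma>"
      unfolding \<gamma>_def by (rule psd_qform_nonneg[OF A])
    define t where "t = \<sigma> / (\<gamma> + 1)"
    have t: "0 < t" "t * \<gamma> \<le> \<sigma>"
      unfolding t_def using \<open>0 < \<sigma>\<close> \<open>0 \<le> \<gamma>\<close> by (simp_all add: field_simps)
    then have "2 * \<sigma> \<le> t * \<gamma>"
      using quadratic[of t] by (simp add: zero_le_mult_iff)
    with t \<open>0 < \<sigma>\<close> show False by linarith
  qed
  then have "\<forall>i\<in>{..<N}. (cmod (w i))\<^sup>2 = 0"
    unfolding \<sigma>_def by (subst sum_nonneg_eq_0_iff[symmetric]) auto
  then show ?thesis
    using i unfolding w_def by simp
qed

text \<open>The reindexed matrix is V^* A V for the 0-1 matrix V of f, so its form at x is the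
  form of A at the pushforward V x.\<close>
lemma psd_reindex:
  assumes A: "psd N A" and f: "\<And>i. i < M \<Longrightarrow> f i < N"
  shows "psd M (mat M M (\<lambda>(i, j). A $$ (f i, f j)))"
  unfolding psd_iff_qform
proof (intro conjI allI)
  let ?B = "mat M M (\<lambda>(i, j). A $$ (f i, f j))"
  show "?B \<in> carrier_mat M M" by simp
  show "adj ?B = ?B"
    unfolding adj_eq_iff[OF mat_carrier]
  proof (intro allI impI)
    fix i j assume "i < M" "j < M"
    then show "cnj (?B $$ (j, i)) = ?B $$ (i, j)"
      using f psd_hermitian[OF A, of "f i" "f j"] by simp
  qed
  fix x :: "nat \<Rightarrow> complex"
  define push where "push z k = (\<Sum>p \<in> {p \<in> {..<M}. f p = k}. z p)" for z :: "nat \<Rightarrow> complex" and k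
  have pushforward: "(\<Sum>p<M. g (f p) * z p) = (\<Sum>k<N. g k * push z k)" for g z
  proof -
    have "(\<Sum>k<N. g k * push z k) = (\<Sum>k<N. \<Sum>p \<in> {p \<in> {..<M}. f p = k}. g (f p) * z p)"
      unfolding push_def sum_distrib_left by (intro sum.cong refl) auto
    also have "\<dots> = (\<Sum>p<M. g (f p) * z p)"
      by (rule sum.group) (use f in auto)
    finally show ?thesis by simp
  qed
  have "qform M ?B x = (\<Sum>q<M. (\<Sum>p<M. A $$ (f q, f p) * x p) * cnj (x q))"
    unfolding sform_def by (simp add: sum_distrib_left sum_distrib_right mult_ac)
  also have "\<dots> = (\<Sum>q<M. (\<Sum>k<N. A $$ (f q, k) * push x k) * cnj (x q))"
    using pushforward[of "\<lambda>k. A $$ (f _, k)" x] by simp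
  also have "\<dots> = (\<Sum>i<N. (\<Sum>k<N. A $$ (i, k) * push x k) * push (cnj \<circ> x) i)"
    using pushforward[of "\<lambda>i. \<Sum>k<N. A $$ (i, k) * push x k" "cnj \<circ> x"] by simp
  also have "\<dots> = qform N A (push x)"
  proof -
    have "push (cnj \<circ> x) i = cnj (push x i)" for i
      unfolding push_def by simp
    then show ?thesis
      unfolding sform_def by (simp add: sum_distrib_left sum_distrib_right mult_ac)
  qed
  finally show "0 \<le> Re (qform M ?B x)"
    using psd_qform_nonneg[OF A] by simp
qed

lemma psd_kron_one:
  assumes Y: "psd k Y"
  shows "psd (k * m) (kron Y (1\<^sub>m m))"
  unfolding psd_iff_qform
proof (intro conjI allI)
  have index: "cnj (v (a * m + i)) * kron Y (1\<^sub>m m) $$ (a * m + i, b * m + j) * v (b * m + j) =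
      (if j = i then cnj (v (a * m + i)) * Y $$ (a, b) * v (b * m + i) else 0)"
    if "a < k" "b < k" "i < m" "j < m" for a b i j v
    using that psd_carrier[OF Y] by (simp add: kron_def index_pair_less)
  show carrier: "kron Y (1\<^sub>m m) \<in> carrier_mat (k * m) (k * m)"
    using psd_carrier[OF Y] by (simp add: kron_def)
  show "adj (kron Y (1\<^sub>m m)) = kron Y (1\<^sub>m m)"
    unfolding adj_eq_iff[OF carrier]
  proof (intro allI impI)
    fix x y assume xy: "x < k * m" "y < k * m"
    then have "0 < m" by (cases m) auto
    with xy have "x div m < k" "y div m < k" "x mod m < m" "y mod m < m"
      by (simp_all add: less_mult_imp_div_less)
    then show "cnj (kron Y (1\<^sub>m m) $$ (y, x)) = kron Y (1\<^sub>m m) $$ (x, y)"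
      using xy psd_hermitian[OF Y, of "x div m" "y div m"] psd_carrier[OF Y] by (auto simp: kron_def)
  qed
  fix v
  have "qform (k * m) (kron Y (1\<^sub>m m)) v =
      (\<Sum>a<k. \<Sum>i<m. \<Sum>b<k. \<Sum>j<m. cnj (v (a * m + i)) * kron Y (1\<^sub>m m) $$ (a * m + i, b * m + j) * v (b * m + j))"
    unfolding sform_def sum_lessThan_mult ..
  also have "\<dots> = (\<Sum>a<k. \<Sum>i<m. \<Sum>b<k. cnj (v (a * m + i)) * Y $$ (a, b) * v (b * m + i))"
    by (intro sum.cong refl) (simp add: index sum.delta)
  also have "\<dots> = (\<Sum>i<m. qform k Y (\<lambda>a. v (a * m + i)))"
    unfolding sform_def by (rule sum.swap)
  finally have "qform (k * m) (kron Y (1\<^sub>m m)) v = (\<Sum>i<m. qform k Y (\<lambda>a. v (a * m + i)))" .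
  then show "0 \<le> Re (qform (k * m) (kron Y (1\<^sub>m m)) v)"
    using psd_qform_nonneg[OF Y] by (simp add: sum_nonneg)
qed

lemma psd_rank_one: "psd N (mat N N (\<lambda>(p, q). v p * cnj (v q)))"
  unfolding psd_iff_qform
proof (intro conjI allI)
  let ?X = "mat N N (\<lambda>(p, q). v p * cnj (v q))"
  show "?X \<in> carrier_mat N N" by simp
  show "adj ?X = ?X" unfolding adj_eq_iff[OF mat_carrier] by simp
  fix x
  define s where "s = (\<Sum>i<N. cnj (x i) * v i)"
  have "qform N ?X x = s * cnj s"
    unfolding sform_def s_def by (simp add: sum_product mult_ac)
  then show "0 \<le> Re (qform N ?X x)" by (simp add: complex_mult_cnj)
qed

lemma psd_limit:
  assumes B: "\<And>t. psd N (B t)" and C: "C \<in> carrier_mat N N"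
    and lim: "\<And>i j. i < N \<Longrightarrow> j < N \<Longrightarrow> (\<lambda>t. B t $$ (i, j)) \<longlonglongrightarrow> C $$ (i, j)"
  shows "psd N C"
  unfolding psd_iff_qform
proof (intro conjI allI)
  show "C \<in> carrier_mat N N" by (rule C)
  show "adj C = C" unfolding adj_eq_iff[OF C]
  proof (intro allI impI)
    fix i j assume ij: "i < N" "j < N"
    have "(\<lambda>t. cnj (B t $$ (j, i))) \<longlonglongrightarrow> cnj (C $$ (j, i))"
      by (intro tendsto_intros lim ij)
    moreover have "cnj (B t $$ (j, i)) = B t $$ (i, j)" for t
      using psd_hermitian[OF B ij] by simp
    ultimately show "cnj (C $$ (j, i)) = C $$ (i, j)"
      using lim[OF ij] LIMSEQ_unique by auto
  qed
  fix x
  have "(\<lambda>t. Re (qform N (B t) x)) \<longlonglongrightarrow> Re (qform N C x)"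
    unfolding sform_def by (intro tendsto_intros lim) auto
  then show "0 \<le> Re (qform N C x)"
    using psd_qform_nonneg[OF B] by (intro LIMSEQ_le_const) auto
qed

section \<open>Measurements\<close>

definition projection :: "nat \<Rightarrow> complex mat \<Rightarrow> bool" where
  "projection N Q \<longleftrightarrow> Q \<in> carrier_mat N N \<and> adj Q = Q \<and> Q * Q = Q"

lemma projective_measurement_projection:
  "projective_measurement N d P \<Longrightarrow> j < d \<Longrightarrow> projection N (P j)"
  unfolding projective_measurement_def povm_def psd_def projection_def by simp

lemma mtrace_mult_projection:
  assumes A: "A \<in> carrier_mat N N" and Q: "projection N Q"
  shows "mtrace (A * Q) = (\<Sum>l<N. qform N A (\<lambda>k. Q $$ (k, l)))"
proof -
  have Q_carrier: "Q \<in> carrier_mat N N" and Q_adj: "adj Q = Q" and Q_idem: "Q * Q = Q"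
    using Q unfolding projection_def by simp_all
  have Q_entry: "Q $$ (k, i) = (\<Sum>l<N. cnj (Q $$ (i, l)) * Q $$ (k, l))" if "k < N" "i < N" for k i
  proof -
    have "Q $$ (k, i) = (\<Sum>l<N. Q $$ (k, l) * Q $$ (l, i))"
      using mult_mat_index[OF Q_carrier Q_carrier that] Q_idem by simp
    also have "\<dots> = (\<Sum>l<N. cnj (Q $$ (i, l)) * Q $$ (k, l))"
      using Q_adj that unfolding adj_eq_iff[OF Q_carrier] by (auto intro!: sum.cong)
    finally show ?thesis .
  qed
  have "mtrace (A * Q) = (\<Sum>i<N. \<Sum>k<N. A $$ (i, k) * Q $$ (k, i))"
    by (rule mtrace_mult[OF A Q_carrier])
  also have "\<dots> = (\<Sum>i<N. \<Sum>k<N. \<Sum>l<N. cnj (Q $$ (i, l)) * A $$ (i, k) * Q $$ (k, l))"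
  proof (intro sum.cong refl)
    fix i k assume "i \<in> {..<N}" "k \<in> {..<N}"
    then show "A $$ (i, k) * Q $$ (k, i) = (\<Sum>l<N. cnj (Q $$ (i, l)) * A $$ (i, k) * Q $$ (k, l))"
      using Q_entry[of k i] by (simp add: sum_distrib_left mult_ac)
  qed
  also have "\<dots> = (\<Sum>i<N. \<Sum>l<N. \<Sum>k<N. cnj (Q $$ (i, l)) * A $$ (i, k) * Q $$ (k, l))"
    by (rule sum.cong[OF refl], rule sum.swap)
  also have "\<dots> = (\<Sum>l<N. \<Sum>i<N. \<Sum>k<N. cnj (Q $$ (i, l)) * A $$ (i, k) * Q $$ (k, l))"
    by (rule sum.swap)
  also have "\<dots> = (\<Sum>l<N. qform N A (\<lambda>k. Q $$ (k, l)))"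
    unfolding sform_def ..
  finally show ?thesis .
qed

lemma mtrace_psd_mult_projection_nonneg:
  assumes A: "psd N A" and Q: "projection N Q"
  shows "0 \<le> Re (mtrace (A * Q))"
  unfolding mtrace_mult_projection[OF psd_carrier[OF A] Q]
  using psd_qform_nonneg[OF A] by (simp add: sum_nonneg)

lemma mtrace_psd_mult_projection_eq_0:
  assumes A: "psd N A" and Q: "projection N Q" and tr: "Re (mtrace (A * Q)) = 0"
  shows "A * Q = 0\<^sub>m N N"
proof -
  have Q_carrier: "Q \<in> carrier_mat N N"
    using Q unfolding projection_def by simp
  have "(\<Sum>l<N. Re (qform N A (\<lambda>k. Q $$ (k, l)))) = 0"
    using tr unfolding mtrace_mult_projection[OF psd_carrier[OF A] Q] by simp
  then have "Re (qform N A (\<lambda>k. Q $$ (k, l))) = 0" if "l < N" for l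
    using that by (subst (asm) sum_nonneg_eq_0_iff) (auto simp: psd_qform_nonneg[OF A])
  then show ?thesis
    using psd_qform_eq_0_imp_mult_eq_0[OF A] mult_mat_index[OF psd_carrier[OF A] Q_carrier]
      psd_carrier[OF A] Q_carrier
    by (auto intro!: eq_matI)
qed

lemma msum_carrier: "msum N d A \<in> carrier_mat N N"
  unfolding msum_def by simp

lemma mtrace_msum:
  assumes "\<And>k. k < d \<Longrightarrow> A k \<in> carrier_mat N N"
  shows "mtrace (msum N d A) = (\<Sum>k<d. mtrace (A k))"
proof -
  have "mtrace (msum N d A) = (\<Sum>i<N. \<Sum>k<d. A k $$ (i, i))"
    unfolding mtrace_def msum_def by simp
  also have "\<dots> = (\<Sum>k<d. mtrace (A k))"
    unfolding mtrace_def using assms by (subst sum.swap) (auto intro!: sum.cong)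
  finally show ?thesis .
qed

lemma mult_msum:
  assumes A: "A \<in> carrier_mat N N" and B: "\<And>k. k < d \<Longrightarrow> B k \<in> carrier_mat N N"
  shows "A * msum N d B = msum N d (\<lambda>k. A * B k)"
proof (rule eq_matI)
  fix i j assume "i < dim_row (msum N d (\<lambda>k. A * B k))" "j < dim_col (msum N d (\<lambda>k. A * B k))"
  then have ij: "i < N" "j < N" unfolding msum_def by simp_all
  have "(A * msum N d B) $$ (i, j) = (\<Sum>l<N. \<Sum>k<d. A $$ (i, l) * B k $$ (l, j))"
    using mult_mat_index[OF A msum_carrier ij] ij by (simp add: msum_def sum_distrib_left)
  also have "\<dots> = (\<Sum>k<d. (A * B k) $$ (i, j))"
    using mult_mat_index[OF A B ij] by (subst sum.swap) simp
  finally show "(A * msum N d B) $$ (i, j) = msum N d (\<lambda>k. A * B k) $$ (i, j)"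
    using ij by (simp add: msum_def)
qed (use A in \<open>simp_all add: msum_def\<close>)

lemma msum_mult:
  assumes B: "B \<in> carrier_mat N N" and A: "\<And>k. k < d \<Longrightarrow> A k \<in> carrier_mat N N"
  shows "msum N d A * B = msum N d (\<lambda>k. A k * B)"
proof (rule eq_matI)
  fix i j assume "i < dim_row (msum N d (\<lambda>k. A k * B))" "j < dim_col (msum N d (\<lambda>k. A k * B))"
  then have ij: "i < N" "j < N" unfolding msum_def by simp_all
  have "(msum N d A * B) $$ (i, j) = (\<Sum>l<N. \<Sum>k<d. A k $$ (i, l) * B $$ (l, j))"
    using mult_mat_index[OF msum_carrier B ij] ij by (simp add: msum_def sum_distrib_right)
  also have "\<dots> = (\<Sum>k<d. (A k * B) $$ (i, j))"
    using mult_mat_index[OF A B ij] by (subst sum.swap) simp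
  finally show "(msum N d A * B) $$ (i, j) = msum N d (\<lambda>k. A k * B) $$ (i, j)"
    using ij by (simp add: msum_def)
qed (use B in \<open>simp_all add: msum_def\<close>)

lemma msum_single:
  assumes "j < d" "B j \<in> carrier_mat N N" "\<And>k. k < d \<Longrightarrow> k \<noteq> j \<Longrightarrow> B k = 0\<^sub>m N N"
  shows "msum N d B = B j"
proof -
  have "(\<Sum>k<d. B k $$ (x, y)) = B j $$ (x, y)" if "x < N" "y < N" for x y
    using assms that by (subst sum.remove[of _ j]) auto
  then show ?thesis
    using assms(2) by (auto intro!: eq_matI simp: msum_def)
qed

context
  fixes N d :: nat and A P :: "nat \<Rightarrow> complex mat"
  assumes A: "povm N d A" and P: "projective_measurement N d P"
begin

lemma povm_psd: "j < d \<Longrightarrow> psd N (A j)"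
  using A unfolding povm_def by simp

lemma povm_carrier: "j < d \<Longrightarrow> A j \<in> carrier_mat N N"
  using povm_psd psd_carrier by blast

lemma projective_measurement_carrier: "k < d \<Longrightarrow> P k \<in> carrier_mat N N"
  using projective_measurement_projection[OF P] unfolding projection_def by blast

lemma povm_projective_overlap_nonneg: "j < d \<Longrightarrow> k < d \<Longrightarrow> 0 \<le> Re (mtrace (A j * P k))"
  using mtrace_psd_mult_projection_nonneg povm_psd projective_measurement_projection[OF P]
  by blast

lemma povm_projective_overlap_row_sum: "j < d \<Longrightarrow> (\<Sum>k<d. Re (mtrace (A j * P k))) = Re (mtrace (A j))"
proof -
  assume j: "j < d"
  have "(\<Sum>k<d. mtrace (A j * P k)) = mtrace (msum N d (\<lambda>k. A j * P k))"
    using povm_carrier[OF j] projective_measurement_carrier by (simp add: mtrace_msum)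
  also have "\<dots> = mtrace (A j * msum N d P)"
    by (rule arg_cong[OF mult_msum[OF povm_carrier[OF j] projective_measurement_carrier, symmetric]])
  also have "\<dots> = mtrace (A j)"
    using P povm_carrier[OF j] unfolding projective_measurement_def povm_def by simp
  finally show ?thesis
    by (metis Re_sum)
qed

lemma povm_projective_overlap_total: "(\<Sum>j<d. \<Sum>k<d. Re (mtrace (A j * P k))) = real N"
proof -
  have "(\<Sum>j<d. \<Sum>k<d. Re (mtrace (A j * P k))) = Re (\<Sum>j<d. mtrace (A j))"
    by (simp add: povm_projective_overlap_row_sum)
  also have "\<dots> = Re (mtrace (msum N d A))"
    by (simp add: mtrace_msum povm_carrier)
  also have "\<dots> = real N"
    using A unfolding povm_def mtrace_def by simp
  finally show ?thesis .
qed

lemma povm_projective_overlap_le: "Re (\<Sum>j<d. mtrace (A j * P j)) \<le> real N"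
proof -
  have "(\<Sum>j<d. Re (mtrace (A j * P j))) \<le> (\<Sum>j<d. \<Sum>k<d. Re (mtrace (A j * P k)))"
    by (intro sum_mono member_le_sum) (auto simp: povm_projective_overlap_nonneg)
  then show ?thesis
    by (simp add: povm_projective_overlap_total)
qed

lemma povm_projective_overlap_eq:
  assumes eq: "Re (\<Sum>j<d. mtrace (A j * P j)) = real N" and j: "j < d"
  shows "A j = P j"
proof -
  let ?S = "\<lambda>j k. Re (mtrace (A j * P k))"
  have "(\<Sum>j<d. \<Sum>k \<in> {..<d} - {j}. ?S j k) = (\<Sum>j<d. \<Sum>k<d. ?S j k) - (\<Sum>j<d. ?S j j)"
    by (simp add: sum.remove[of "{..<d}"] sum.distrib)
  also have "\<dots> = 0"
    using eq by (simp add: povm_projective_overlap_total)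
  finally have total: "(\<Sum>j<d. \<Sum>k \<in> {..<d} - {j}. ?S j k) = 0" .
  have "?S j k = 0" if "j < d" "k < d" "k \<noteq> j" for j k
  proof -
    have row: "(\<Sum>k \<in> {..<d} - {j}. ?S j k) = 0"
      by (rule sum_nonneg_0[OF _ _ total]) (use that in \<open>auto intro!: sum_nonneg povm_projective_overlap_nonneg\<close>)
    show ?thesis
      by (rule sum_nonneg_0[OF _ _ row]) (use that in \<open>auto intro: povm_projective_overlap_nonneg\<close>)
  qed
  then have orth: "A j * P k = 0\<^sub>m N N" if "j < d" "k < d" "k \<noteq> j" for j k
    using that mtrace_psd_mult_projection_eq_0 povm_psd projective_measurement_projection[OF P]
    by blast
  have "A j = A j * msum N d P"
    using P povm_carrier[OF j] unfolding projective_measurement_def povm_def by simp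
  also have "\<dots> = msum N d (\<lambda>k. A j * P k)"
    by (rule mult_msum[OF povm_carrier[OF j] projective_measurement_carrier])
  also have "\<dots> = A j * P j"
    using orth j povm_carrier[OF j] projective_measurement_carrier[OF j]
    by (intro msum_single) auto
  also have "\<dots> = msum N d (\<lambda>k. A k * P j)"
    using orth j povm_carrier[OF j] projective_measurement_carrier[OF j]
    by (intro msum_single[symmetric]) auto
  also have "\<dots> = msum N d A * P j"
    by (rule msum_mult[OF projective_measurement_carrier[OF j] povm_carrier, symmetric])
  also have "\<dots> = P j"
    using A projective_measurement_carrier[OF j] unfolding povm_def by simp
  finally show ?thesis .
qed

end

section \<open>Linear maps and their tensor product\<close>

lemma munit_carrier [simp]: "munit n a b \<in> carrier_mat n n"
  unfolding munit_def by simp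

lemma munit_dim [simp]: "dim_row (munit n a b) = n" "dim_col (munit n a b) = n"
  unfolding munit_def by simp_all

lemma munit_index [simp]:
  "p < n \<Longrightarrow> q < n \<Longrightarrow> munit n a b $$ (p, q) = (if p = a \<and> q = b then 1 else 0)"
  unfolding munit_def by simp

lemma lin_map_carrier: "lin_map n m L \<Longrightarrow> A \<in> carrier_mat n n \<Longrightarrow> L A \<in> carrier_mat m m"
  unfolding lin_map_def by blast

lemma lin_map_zero:
  assumes L: "lin_map n m L"
  shows "L (0\<^sub>m n n) = 0\<^sub>m m m"
proof -
  have "L (0\<^sub>m n n) = L (0 \<cdot>\<^sub>m 0\<^sub>m n n)"
    by (metis smult_zero_mat zero_carrier_mat)
  also have "\<dots> = 0 \<cdot>\<^sub>m L (0\<^sub>m n n)"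
    using L unfolding lin_map_def by (metis zero_carrier_mat)
  also have "\<dots> = 0\<^sub>m m m"
    using lin_map_carrier[OF L zero_carrier_mat] by (intro eq_matI) auto
  finally show ?thesis .
qed

lemma lin_map_expand:
  assumes L: "lin_map n m L" and A: "A \<in> carrier_mat n n" and ij: "i < m" "j < m"
  shows "L A $$ (i, j) = (\<Sum>a<n. \<Sum>b<n. A $$ (a, b) * L (munit n a b) $$ (i, j))"
proof -
  define restrict where "restrict S = mat n n (\<lambda>(a, b). if (a, b) \<in> S then A $$ (a, b) else 0)" for S
  have expand: "L (restrict S) $$ (i, j) = (\<Sum>(a, b) \<in> S. A $$ (a, b) * L (munit n a b) $$ (i, j))"
    if "finite S" "S \<subseteq> {..<n} \<times> {..<n}" for S
    using that
  proof (induction S rule: finite_induct)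
    case empty
    have "restrict {} = 0\<^sub>m n n"
      unfolding restrict_def by (rule eq_matI) auto
    then show ?case
      using lin_map_zero[OF L] ij by simp
  next
    case (insert p S)
    obtain a b where p: "p = (a, b)" by force
    have "restrict (insert p S) = restrict S + A $$ (a, b) \<cdot>\<^sub>m munit n a b"
      unfolding restrict_def p by (rule eq_matI) (use insert.hyps p in auto)
    then have "L (restrict (insert p S)) = L (restrict S) + A $$ (a, b) \<cdot>\<^sub>m L (munit n a b)"
      using L unfolding lin_map_def by (simp add: restrict_def)
    moreover have "L (restrict S) \<in> carrier_mat m m" "L (munit n a b) \<in> carrier_mat m m"
      using lin_map_carrier[OF L] by (simp_all add: restrict_def)
    ultimately have "L (restrict (insert p S)) $$ (i, j) =
        L (restrict S) $$ (i, j) + A $$ (a, b) * L (munit n a b) $$ (i, j)"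
      using ij by simp
    then show ?case
      using insert p by simp
  qed
  have "restrict ({..<n} \<times> {..<n}) = A"
    unfolding restrict_def using A by (intro eq_matI) auto
  then have "L A $$ (i, j) = (\<Sum>(a, b) \<in> {..<n} \<times> {..<n}. A $$ (a, b) * L (munit n a b) $$ (i, j))"
    using expand[of "{..<n} \<times> {..<n}"] by simp
  then show ?thesis
    by (simp add: sum.cartesian_product)
qed

lemma lin_map_one:
  assumes "lin_map n m L" "i < m" "j < m"
  shows "L (1\<^sub>m n) $$ (i, j) = (\<Sum>a<n. L (munit n a a) $$ (i, j))"
  unfolding lin_map_expand[OF assms(1) one_carrier_mat assms(2,3)]
  by (simp add: sum_indicator_mult)

lemma cpu_map_lin_map: "cpu_map n m L \<Longrightarrow> lin_map n m L"
  unfolding cpu_map_def cp_map_def by simp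

lemma cpu_map_cp_map: "cpu_map n m L \<Longrightarrow> cp_map n m L"
  unfolding cpu_map_def by simp

lemma cp_map_psd: "cp_map n m L \<Longrightarrow> psd (k * n) X \<Longrightarrow> psd (k * m) (block_apply k n m L X)"
  unfolding cp_map_def by simp

lemma block_apply_index:
  assumes L: "lin_map n m L" and ij: "i < k * m" "j < k * m"
  shows "block_apply k n m L X $$ (i, j) =
    (\<Sum>a<n. \<Sum>b<n. X $$ (i div m * n + a, j div m * n + b) * L (munit n a b) $$ (i mod m, j mod m))"
proof -
  have "0 < m" using ij by (cases m) auto
  then show ?thesis
    using ij unfolding block_apply_def by (simp add: lin_map_expand[OF L])
qed

lemma block_apply_index_pair:
  assumes L: "lin_map n m L" and "p < k" "q < k" "i < m" "j < m"
  shows "block_apply k n m L X $$ (p * m + i, q * m + j) =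
    (\<Sum>a<n. \<Sum>b<n. X $$ (p * n + a, q * n + b) * L (munit n a b) $$ (i, j))"
  using assms block_apply_index[OF L index_pair_less index_pair_less] by simp

lemma tensor_map_carrier: "tensor_map n1 n2 m1 m2 L1 L2 X \<in> carrier_mat (m1 * m2) (m1 * m2)"
  unfolding tensor_map_def by simp

lemma tensor_map_index:
  assumes L1: "lin_map n1 m1 L1" and L2: "lin_map n2 m2 L2" and xy: "x < m1 * m2" "y < m1 * m2"
  shows "tensor_map n1 n2 m1 m2 L1 L2 X $$ (x, y) =
    (\<Sum>a<n1. \<Sum>b<n1. \<Sum>c<n2. \<Sum>e<n2. X $$ (a * n2 + c, b * n2 + e) *
       (L1 (munit n1 a b) $$ (x div m2, y div m2) * L2 (munit n2 c e) $$ (x mod m2, y mod m2)))"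
proof -
  have "L1 (munit n1 a b) \<in> carrier_mat m1 m1" "L2 (munit n2 c e) \<in> carrier_mat m2 m2" for a b c e
    using lin_map_carrier[OF L1 munit_carrier] lin_map_carrier[OF L2 munit_carrier] by auto
  then have "dim_row (L1 (munit n1 a b)) = m1" "dim_col (L1 (munit n1 a b)) = m1"
    "dim_row (L2 (munit n2 c e)) = m2" "dim_col (L2 (munit n2 c e)) = m2" for a b c e
    by (meson carrier_matD)+
  then show ?thesis
    using xy unfolding tensor_map_def by (simp add: kron_index)
qed

lemma tensor_map_msum:
  "tensor_map n1 n2 m1 m2 L1 L2 (msum (n1 * n2) d F) =
     msum (m1 * m2) d (\<lambda>j. tensor_map n1 n2 m1 m2 L1 L2 (F j))"
proof (rule eq_matI)
  fix x y
  assume "x < dim_row (msum (m1 * m2) d (\<lambda>j. tensor_map n1 n2 m1 m2 L1 L2 (F j)))"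
    "y < dim_col (msum (m1 * m2) d (\<lambda>j. tensor_map n1 n2 m1 m2 L1 L2 (F j)))"
  then have xy: "x < m1 * m2" "y < m1 * m2"
    unfolding msum_def by simp_all
  let ?K = "\<lambda>a b c e. kron (L1 (munit n1 a b)) (L2 (munit n2 c e)) $$ (x, y)"
  have "tensor_map n1 n2 m1 m2 L1 L2 (msum (n1 * n2) d F) $$ (x, y) =
      (\<Sum>a<n1. \<Sum>b<n1. \<Sum>c<n2. \<Sum>e<n2. (\<Sum>j<d. F j $$ (a * n2 + c, b * n2 + e)) * ?K a b c e)"
    unfolding tensor_map_def using xy by (simp add: msum_def index_pair_less)
  also have "\<dots> = (\<Sum>j<d. \<Sum>a<n1. \<Sum>b<n1. \<Sum>c<n2. \<Sum>e<n2. F j $$ (a * n2 + c, b * n2 + e) * ?K a b c e)"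
    by (simp only: sum_distrib_right sum.swap[where B = "{..<d}"])
  also have "\<dots> = msum (m1 * m2) d (\<lambda>j. tensor_map n1 n2 m1 m2 L1 L2 (F j)) $$ (x, y)"
    unfolding tensor_map_def msum_def using xy by simp
  finally show "tensor_map n1 n2 m1 m2 L1 L2 (msum (n1 * n2) d F) $$ (x, y) =
      msum (m1 * m2) d (\<lambda>j. tensor_map n1 n2 m1 m2 L1 L2 (F j)) $$ (x, y)" .
qed (simp_all add: tensor_map_def msum_def)

lemma tensor_map_kron:
  assumes L1: "lin_map n1 m1 L1" and L2: "lin_map n2 m2 L2"
    and A: "A \<in> carrier_mat n1 n1" and B: "B \<in> carrier_mat n2 n2"
  shows "tensor_map n1 n2 m1 m2 L1 L2 (kron A B) = kron (L1 A) (L2 B)"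
proof (rule eq_matI)
  have LA: "L1 A \<in> carrier_mat m1 m1" and LB: "L2 B \<in> carrier_mat m2 m2"
    using lin_map_carrier L1 L2 A B by blast+
  fix x y assume "x < dim_row (kron (L1 A) (L2 B))" "y < dim_col (kron (L1 A) (L2 B))"
  then have xy: "x < m1 * m2" "y < m1 * m2"
    using LA LB by (simp_all add: kron_def)
  then have "0 < m2" by (cases m2) auto
  with xy have div: "x div m2 < m1" "y div m2 < m1" and mod: "x mod m2 < m2" "y mod m2 < m2"
    by (simp_all add: less_mult_imp_div_less)
  have "tensor_map n1 n2 m1 m2 L1 L2 (kron A B) $$ (x, y) =
      (\<Sum>a<n1. \<Sum>b<n1. \<Sum>c<n2. \<Sum>e<n2.
        (A $$ (a, b) * L1 (munit n1 a b) $$ (x div m2, y div m2)) *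
        (B $$ (c, e) * L2 (munit n2 c e) $$ (x mod m2, y mod m2)))"
    unfolding tensor_map_index[OF L1 L2 xy] using A B
    by (intro sum.cong refl) (simp add: kron_index index_pair_less mult_ac)
  also have "\<dots> = L1 A $$ (x div m2, y div m2) * L2 B $$ (x mod m2, y mod m2)"
    unfolding lin_map_expand[OF L1 A div] lin_map_expand[OF L2 B mod]
    by (simp only: sum_distrib_right) (simp only: sum_distrib_left)
  also have "\<dots> = kron (L1 A) (L2 B) $$ (x, y)"
    using LA LB xy by (simp add: kron_index)
  finally show "tensor_map n1 n2 m1 m2 L1 L2 (kron A B) $$ (x, y) = kron (L1 A) (L2 B) $$ (x, y)" .
qed (use lin_map_carrier[OF L1 A] lin_map_carrier[OF L2 B] in \<open>auto simp: tensor_map_def kron_def\<close>)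

lemma tensor_map_one:
  assumes L1: "cpu_map n1 m1 L1" and L2: "cpu_map n2 m2 L2"
  shows "tensor_map n1 n2 m1 m2 L1 L2 (1\<^sub>m (n1 * n2)) = 1\<^sub>m (m1 * m2)"
  using tensor_map_kron[OF cpu_map_lin_map[OF L1] cpu_map_lin_map[OF L2] one_carrier_mat one_carrier_mat]
    L1 L2
  unfolding cpu_map_def by (simp add: kron_one)

definition swap_index :: "nat \<Rightarrow> nat \<Rightarrow> nat \<Rightarrow> nat" where
  "swap_index n m x = x mod m * n + x div m"

lemma swap_index_less: "x < n * m \<Longrightarrow> swap_index n m x < m * n"
proof -
  assume x: "x < n * m"
  then have "0 < m" by (cases m) auto
  with x show ?thesis
    unfolding swap_index_def by (simp add: index_pair_less less_mult_imp_div_less)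
qed

lemma swap_index_pair [simp]: "i < m \<Longrightarrow> swap_index n m (a * m + i) = i * n + a"
  unfolding swap_index_def by simp

text \<open>A matrix on C^m \<otimes> C^n conjugated by the flip C^n \<otimes> C^m \<rightarrow> C^m \<otimes> C^n.\<close>
definition flip_mat :: "nat \<Rightarrow> nat \<Rightarrow> complex mat \<Rightarrow> complex mat" where
  "flip_mat n m A = mat (n * m) (n * m) (\<lambda>(x, y). A $$ (swap_index n m x, swap_index n m y))"

lemma psd_flip_mat: "psd (m * n) A \<Longrightarrow> psd (n * m) (flip_mat n m A)"
  unfolding flip_mat_def by (rule psd_reindex) (use swap_index_less in auto)

lemma tensor_map_eq_flip_block_apply:
  assumes lin1: "lin_map n1 m1 L1" and lin2: "lin_map n2 m2 L2"
  shows "tensor_map n1 n2 m1 m2 L1 L2 X =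
    flip_mat m1 m2 (block_apply m2 n1 m1 L1 (flip_mat m2 n1 (block_apply n1 n2 m2 L2 X)))"
    (is "_ = flip_mat m1 m2 (block_apply m2 n1 m1 L1 ?Y)")
proof (rule eq_matI)
  fix x y assume "x < dim_row (flip_mat m1 m2 (block_apply m2 n1 m1 L1 ?Y))"
    "y < dim_col (flip_mat m1 m2 (block_apply m2 n1 m1 L1 ?Y))"
  then have xy: "x < m1 * m2" "y < m1 * m2"
    unfolding flip_mat_def by simp_all
  define p q r s where "p = x div m2" and "q = x mod m2" and "r = y div m2" and "s = y mod m2"
  have "0 < m2" using xy by (cases m2) auto
  then have pr: "p < m1" "r < m1" and qs: "q < m2" "s < m2" and x: "x = p * m2 + q" and y: "y = r * m2 + s"
    unfolding p_def q_def r_def s_def using xy by (simp_all add: less_mult_imp_div_less)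
  have Y_index: "?Y $$ (q * n1 + a, s * n1 + b) =
      (\<Sum>c<n2. \<Sum>e<n2. X $$ (a * n2 + c, b * n2 + e) * L2 (munit n2 c e) $$ (q, s))"
    if "a < n1" "b < n1" for a b
    using that qs unfolding flip_mat_def
    by (simp add: index_pair_less block_apply_index_pair[OF lin2])
  have "flip_mat m1 m2 (block_apply m2 n1 m1 L1 ?Y) $$ (x, y) =
      (\<Sum>a<n1. \<Sum>b<n1. ?Y $$ (q * n1 + a, s * n1 + b) * L1 (munit n1 a b) $$ (p, r))"
    using pr qs unfolding flip_mat_def x y
    by (simp add: index_pair_less block_apply_index_pair[OF lin1])
  also have "\<dots> = (\<Sum>a<n1. \<Sum>b<n1.
      (\<Sum>c<n2. \<Sum>e<n2. X $$ (a * n2 + c, b * n2 + e) * L2 (munit n2 c e) $$ (q, s)) *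
      L1 (munit n1 a b) $$ (p, r))"
    by (intro sum.cong refl) (simp add: Y_index)
  also have "\<dots> = tensor_map n1 n2 m1 m2 L1 L2 X $$ (x, y)"
    unfolding tensor_map_index[OF lin1 lin2 xy] p_def q_def r_def s_def
    by (simp add: sum_distrib_left sum_distrib_right mult_ac)
  finally show "tensor_map n1 n2 m1 m2 L1 L2 X $$ (x, y) =
      flip_mat m1 m2 (block_apply m2 n1 m1 L1 ?Y) $$ (x, y)" ..
qed (simp_all add: flip_mat_def tensor_map_def)

lemma tensor_map_psd:
  assumes L1: "cp_map n1 m1 L1" and L2: "cp_map n2 m2 L2" and X: "psd (n1 * n2) X"
  shows "psd (m1 * m2) (tensor_map n1 n2 m1 m2 L1 L2 X)"
proof -
  have "psd (m2 * n1) (flip_mat m2 n1 (block_apply n1 n2 m2 L2 X))"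
    by (rule psd_flip_mat[OF cp_map_psd[OF L2 X]])
  then have "psd (m1 * m2) (flip_mat m1 m2 (block_apply m2 n1 m1 L1 (flip_mat m2 n1 (block_apply n1 n2 m2 L2 X))))"
    by (rule psd_flip_mat[OF cp_map_psd[OF L1]])
  moreover have "lin_map n1 m1 L1" "lin_map n2 m2 L2"
    using L1 L2 unfolding cp_map_def by simp_all
  ultimately show ?thesis
    by (simp add: tensor_map_eq_flip_block_apply)
qed

lemma tensor_map_povm:
  assumes L1: "cpu_map n1 m1 L1" and L2: "cpu_map n2 m2 L2" and F: "povm (n1 * n2) d F"
  shows "povm (m1 * m2) d (\<lambda>j. tensor_map n1 n2 m1 m2 L1 L2 (F j))"
  using F tensor_map_psd[OF cpu_map_cp_map[OF L1] cpu_map_cp_map[OF L2]]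
  unfolding povm_def by (simp add: tensor_map_msum[symmetric] tensor_map_one[OF L1 L2])

definition score ::
  "nat \<Rightarrow> nat \<Rightarrow> nat \<Rightarrow> nat \<Rightarrow> nat \<Rightarrow> (nat \<Rightarrow> complex mat) \<Rightarrow> (nat \<Rightarrow> complex mat) \<Rightarrow>
   (complex mat \<Rightarrow> complex mat) \<Rightarrow> (complex mat \<Rightarrow> complex mat) \<Rightarrow> real" where
  "score n1 n2 m1 m2 d F P L1 L2 = Re (\<Sum>j<d. mtrace (tensor_map n1 n2 m1 m2 L1 L2 (F j) * P j))"

lemma score_le:
  assumes "cpu_map n1 m1 L1" "cpu_map n2 m2 L2"
    and "projective_measurement (m1 * m2) d P" "povm (n1 * n2) d F"
  shows "score n1 n2 m1 m2 d F P L1 L2 \<le> real (m1 * m2)"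
  unfolding score_def using povm_projective_overlap_le[OF tensor_map_povm] assms by blast

lemma score_eq_imp_tensor_map_eq:
  assumes "cpu_map n1 m1 L1" "cpu_map n2 m2 L2"
    and "projective_measurement (m1 * m2) d P" "povm (n1 * n2) d F"
    and "score n1 n2 m1 m2 d F P L1 L2 = real (m1 * m2)" "j < d"
  shows "tensor_map n1 n2 m1 m2 L1 L2 (F j) = P j"
  using povm_projective_overlap_eq[OF tensor_map_povm] assms unfolding score_def by blast

definition corner_map :: "nat \<Rightarrow> complex mat \<Rightarrow> complex mat" where
  "corner_map m A = A $$ (0, 0) \<cdot>\<^sub>m 1\<^sub>m m"

lemma cpu_map_corner_map:
  assumes n: "0 < n"
  shows "cpu_map n m (corner_map m)"
  unfolding cpu_map_def cp_map_def
proof (intro conjI allI impI)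
  show "lin_map n m (corner_map m)"
    unfolding lin_map_def corner_map_def using n by (auto intro!: eq_matI simp: algebra_simps)
  show "corner_map m (1\<^sub>m n) = 1\<^sub>m m"
    unfolding corner_map_def using n by (auto intro!: eq_matI)
  fix k X assume X: "psd (k * n) X"
  have "block_apply k n m (corner_map m) X = kron (mat k k (\<lambda>(a, b). X $$ (a * n, b * n))) (1\<^sub>m m)"
  proof (rule eq_matI)
    fix i j assume "i < dim_row (kron (mat k k (\<lambda>(a, b). X $$ (a * n, b * n))) (1\<^sub>m m))"
      "j < dim_col (kron (mat k k (\<lambda>(a, b). X $$ (a * n, b * n))) (1\<^sub>m m))"
    then have ij: "i < k * m" "j < k * m"
      by (simp_all add: kron_def)
    then have "0 < m" by (cases m) auto
    with ij n show "block_apply k n m (corner_map m) X $$ (i, j) =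
        kron (mat k k (\<lambda>(a, b). X $$ (a * n, b * n))) (1\<^sub>m m) $$ (i, j)"
      by (simp add: block_apply_def corner_map_def kron_def less_mult_imp_div_less)
  qed (simp_all add: block_apply_def kron_def)
  moreover have "psd k (mat k k (\<lambda>(a, b). X $$ (a * n, b * n)))"
    by (rule psd_reindex[OF X]) (use index_pair_less[of _ k 0 n] n in auto)
  ultimately show "psd (k * m) (block_apply k n m (corner_map m) X)"
    by (simp add: psd_kron_one)
qed

section \<open>Compactness of CPU maps\<close>

text \<open>The unnormalised projector onto \<Sum>_a |a\<rangle> \<otimes> |a\<rangle>; applying id \<otimes> L to it gives the Choi
  matrix of L.\<close>
definition max_entangled :: "nat \<Rightarrow> complex mat" where
  "max_entangled n = mat (n * n) (n * n) (\<lambda>(p, q). if p mod n = p div n \<and> q mod n = q div n then 1 else 0)"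

lemma psd_max_entangled: "psd (n * n) (max_entangled n)"
proof -
  have "max_entangled n =
      mat (n * n) (n * n) (\<lambda>(p, q). (if p mod n = p div n then 1 else 0) * cnj (if q mod n = q div n then 1 else 0))"
    unfolding max_entangled_def by (auto intro!: eq_matI)
  then show ?thesis
    by (simp add: psd_rank_one)
qed

lemma block_apply_max_entangled:
  assumes L: "lin_map n m L" and "a < n" "b < n" "i < m" "j < m"
  shows "block_apply n n m L (max_entangled n) $$ (a * m + i, b * m + j) = L (munit n a b) $$ (i, j)"
  using assms
  by (simp add: block_apply_index_pair[OF L] max_entangled_def index_pair_less sum_indicator2_mult)

lemma cpu_map_munit_bound:
  assumes L: "cpu_map n m L" and ab: "a < n" "b < n" and ij: "i < m" "j < m"
  shows "cmod (L (munit n a b) $$ (i, j)) \<le> 2"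
proof -
  have lin: "lin_map n m L" by (rule cpu_map_lin_map[OF L])
  define J where "J = block_apply n n m L (max_entangled n)"
  have J: "psd (n * m) J"
    unfolding J_def by (rule cp_map_psd[OF cpu_map_cp_map[OF L] psd_max_entangled])
  have J_index: "J $$ (c * m + k, e * m + l) = L (munit n c e) $$ (k, l)"
    if "c < n" "e < n" "k < m" "l < m" for c e k l
    unfolding J_def using block_apply_max_entangled[OF lin that] .
  have diag: "Re (L (munit n c c) $$ (k, k)) \<le> 1" if "c < n" "k < m" for c k
  proof -
    have "0 \<le> Re (L (munit n c' c') $$ (k, k))" if "c' < n" for c'
      using psd_diag_nonneg[OF J index_pair_less[OF \<open>c' < n\<close> \<open>k < m\<close>]] J_index that \<open>k < m\<close>
      by simp
    then have "Re (L (munit n c c) $$ (k, k)) \<le> (\<Sum>c'<n. Re (L (munit n c' c') $$ (k, k)))"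
      using \<open>c < n\<close> by (intro member_le_sum) auto
    also have "\<dots> = Re (L (1\<^sub>m n) $$ (k, k))"
      using lin_map_one[OF lin \<open>k < m\<close> \<open>k < m\<close>] by simp
    also have "\<dots> = 1"
      using L \<open>k < m\<close> unfolding cpu_map_def by simp
    finally show ?thesis .
  qed
  have "cmod (L (munit n a b) $$ (i, j)) = cmod (J $$ (a * m + i, b * m + j))"
    using J_index ab ij by simp
  also have "\<dots> \<le> Re (J $$ (a * m + i, a * m + i)) + Re (J $$ (b * m + j, b * m + j))"
    using ab ij by (intro psd_entry_bound[OF J] index_pair_less)
  also have "\<dots> = Re (L (munit n a a) $$ (i, i)) + Re (L (munit n b b) $$ (j, j))"
    using J_index ab ij by simp
  also have "\<dots> \<le> 2"
    using diag[OF ab(1) ij(1)] diag[OF ab(2) ij(2)] by simp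
  finally show ?thesis .
qed

lemma bounded_seq_convergent_subseq:
  fixes x :: "nat \<Rightarrow> complex"
  assumes bound: "\<And>t. cmod (x t) \<le> B"
  shows "\<exists>r. strict_mono r \<and> convergent (x \<circ> r)"
proof -
  obtain r where r: "strict_mono r" "monoseq (\<lambda>t. Re (x (r t)))"
    using seq_monosub[of "\<lambda>t. Re (x t)"] by blast
  obtain s where s: "strict_mono s" "monoseq (\<lambda>t. Im (x (r (s t))))"
    using seq_monosub[of "\<lambda>t. Im (x (r t))"] by blast
  have "Bseq (\<lambda>t. Re (x (r t)))" "Bseq (\<lambda>t. Im (x (r (s t))))"
    using bound abs_Re_le_cmod abs_Im_le_cmod order_trans by (intro BseqI'; fastforce)+
  then have "convergent ((\<lambda>t. Re (x (r t))) \<circ> s)" "convergent (\<lambda>t. Im (x (r (s t))))"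
    using r s Bseq_monoseq_convergent convergent_subseq_convergent by blast+
  then obtain a b where "(\<lambda>t. Re (x (r (s t)))) \<longlonglongrightarrow> a" "(\<lambda>t. Im (x (r (s t)))) \<longlonglongrightarrow> b"
    by (auto simp: convergent_def comp_def)
  then have "(x \<circ> (r \<circ> s)) \<longlonglongrightarrow> Complex a b"
    using tendsto_Complex by (fastforce simp: comp_def)
  then show ?thesis
    using strict_mono_o[OF r(1) s(1)] convergent_def by blast
qed

lemma finite_family_convergent_subseq:
  fixes x :: "nat \<Rightarrow> 'i \<Rightarrow> complex"
  assumes "finite I" and "\<And>t i. i \<in> I \<Longrightarrow> cmod (x t i) \<le> B"
  shows "\<exists>r. strict_mono r \<and> (\<forall>i\<in>I. convergent (\<lambda>t. x (r t) i))"
  using assms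
proof (induction I rule: finite_induct)
  case empty
  show ?case
    using strict_mono_id by blast
next
  case (insert i0 I)
  obtain r where r: "strict_mono r" "\<forall>i\<in>I. convergent (\<lambda>t. x (r t) i)"
    using insert by blast
  obtain s where s: "strict_mono s" "convergent ((\<lambda>t. x (r t) i0) \<circ> s)"
    using bounded_seq_convergent_subseq[of "\<lambda>t. x (r t) i0" B] insert.prems by blast
  have "convergent (\<lambda>t. x (r (s t)) i)" if "i \<in> insert i0 I" for i
    using that s r convergent_subseq_convergent[of "\<lambda>t. x (r t) i" s] by (auto simp: comp_def)
  then show ?case
    using strict_mono_o[OF r(1) s(1)] by (auto simp: comp_def)
qed

definition coeff_map :: "nat \<Rightarrow> nat \<Rightarrow> (nat \<Rightarrow> nat \<Rightarrow> nat \<Rightarrow> nat \<Rightarrow> complex) \<Rightarrow> complex mat \<Rightarrow> complex mat" where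
  "coeff_map n m K A = mat m m (\<lambda>(i, j). \<Sum>a<n. \<Sum>b<n. A $$ (a, b) * K a b i j)"

lemma lin_map_coeff_map: "lin_map n m (coeff_map n m K)"
  unfolding lin_map_def coeff_map_def
  by (auto intro!: eq_matI simp: sum.distrib sum_distrib_left algebra_simps)

lemma coeff_map_munit:
  "a < n \<Longrightarrow> b < n \<Longrightarrow> i < m \<Longrightarrow> j < m \<Longrightarrow> coeff_map n m K (munit n a b) $$ (i, j) = K a b i j"
  unfolding coeff_map_def by (simp add: sum_indicator2_mult)

definition lin_maps_tendsto ::
  "nat \<Rightarrow> nat \<Rightarrow> (nat \<Rightarrow> complex mat \<Rightarrow> complex mat) \<Rightarrow> (complex mat \<Rightarrow> complex mat) \<Rightarrow> bool" where
  "lin_maps_tendsto n m Ls L \<longleftrightarrow>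
     (\<forall>a<n. \<forall>b<n. \<forall>i<m. \<forall>j<m. (\<lambda>t. Ls t (munit n a b) $$ (i, j)) \<longlonglongrightarrow> L (munit n a b) $$ (i, j))"

lemma lin_maps_tendsto_subseq:
  "lin_maps_tendsto n m Ls L \<Longrightarrow> strict_mono r \<Longrightarrow> lin_maps_tendsto n m (Ls \<circ> r) L"
  unfolding lin_maps_tendsto_def
  using LIMSEQ_subseq_LIMSEQ[of "\<lambda>t. Ls t (munit n _ _) $$ _" _ r] by (simp add: comp_def)

lemma cpu_map_limit:
  assumes Ls: "\<And>t. cpu_map n m (Ls t)" and L: "lin_map n m L" and lim: "lin_maps_tendsto n m Ls L"
  shows "cpu_map n m L"
proof -
  have lins: "lin_map n m (Ls t)" for t
    by (rule cpu_map_lin_map[OF Ls])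
  have lim': "(\<lambda>t. Ls t (munit n a b) $$ (i, j)) \<longlonglongrightarrow> L (munit n a b) $$ (i, j)"
    if "a < n" "b < n" "i < m" "j < m" for a b i j
    using lim that unfolding lin_maps_tendsto_def by blast
  have "psd (k * m) (block_apply k n m L X)" if X: "psd (k * n) X" for k X
  proof (rule psd_limit)
    show "psd (k * m) (block_apply k n m (Ls t) X)" for t
      by (rule cp_map_psd[OF cpu_map_cp_map[OF Ls] X])
    show "block_apply k n m L X \<in> carrier_mat (k * m) (k * m)"
      unfolding block_apply_def by simp
    fix x y assume xy: "x < k * m" "y < k * m"
    then have "0 < m" by (cases m) auto
    then show "(\<lambda>t. block_apply k n m (Ls t) X $$ (x, y)) \<longlonglongrightarrow> block_apply k n m L X $$ (x, y)"
      unfolding block_apply_index[OF lins xy] block_apply_index[OF L xy]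
      by (intro tendsto_intros lim') auto
  qed
  moreover have "L (1\<^sub>m n) = 1\<^sub>m m"
  proof (rule eq_matI)
    fix i j assume "i < dim_row (1\<^sub>m m :: complex mat)" "j < dim_col (1\<^sub>m m :: complex mat)"
    then have ij: "i < m" "j < m" by simp_all
    have "(\<lambda>t. Ls t (1\<^sub>m n) $$ (i, j)) \<longlonglongrightarrow> L (1\<^sub>m n) $$ (i, j)"
      unfolding lin_map_one[OF lins ij] lin_map_one[OF L ij]
      using ij by (intro tendsto_intros lim') auto
    moreover have "Ls t (1\<^sub>m n) = 1\<^sub>m m" for t
      using Ls unfolding cpu_map_def by simp
    ultimately show "L (1\<^sub>m n) $$ (i, j) = 1\<^sub>m m $$ (i, j)"
      by (simp add: LIMSEQ_const_iff)
  qed (use lin_map_carrier[OF L one_carrier_mat] in auto)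
  ultimately show ?thesis
    unfolding cpu_map_def cp_map_def using L by blast
qed

lemma cpu_maps_convergent_subseq:
  fixes Ls :: "nat \<Rightarrow> complex mat \<Rightarrow> complex mat"
  assumes Ls: "\<And>t. cpu_map n m (Ls t)"
  shows "\<exists>r L. strict_mono r \<and> cpu_map n m L \<and> lin_maps_tendsto n m (Ls \<circ> r) L"
proof -
  define I where "I = {..<n} \<times> {..<n} \<times> {..<m} \<times> {..<m}"
  define x where "x t = (\<lambda>(a, b, i, j). Ls t (munit n a b) $$ (i, j))" for t :: nat
  have "cmod (x t q) \<le> 2" if "q \<in> I" for t q
    using that cpu_map_munit_bound[OF Ls] unfolding I_def x_def by auto
  then obtain r where r: "strict_mono r" "\<forall>q\<in>I. convergent (\<lambda>t. x (r t) q)"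
    using finite_family_convergent_subseq[of I x 2] unfolding I_def by auto
  define L where "L = coeff_map n m (\<lambda>a b i j. lim (\<lambda>t. x (r t) (a, b, i, j)))"
  have "lin_maps_tendsto n m (Ls \<circ> r) L"
    unfolding lin_maps_tendsto_def L_def
  proof (intro allI impI)
    fix a b i j assume "a < n" "b < n" "i < m" "j < m"
    then show "(\<lambda>t. (Ls \<circ> r) t (munit n a b) $$ (i, j)) \<longlonglongrightarrow>
        coeff_map n m (\<lambda>a b i j. lim (\<lambda>t. x (r t) (a, b, i, j))) (munit n a b) $$ (i, j)"
      using r(2) unfolding I_def by (simp add: coeff_map_munit convergent_LIMSEQ_iff x_def)
  qed
  moreover have "cpu_map n m L"
    using cpu_map_limit[where Ls = "Ls \<circ> r", OF _ _ calculation] Ls lin_map_coeff_map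
    unfolding L_def by simp
  ultimately show ?thesis
    using r(1) by blast
qed

lemma tensor_map_tendsto:
  assumes lin1: "\<And>t. lin_map n1 m1 (Ls1 t)" "lin_map n1 m1 L1"
    and lin2: "\<And>t. lin_map n2 m2 (Ls2 t)" "lin_map n2 m2 L2"
    and lim1: "lin_maps_tendsto n1 m1 Ls1 L1" and lim2: "lin_maps_tendsto n2 m2 Ls2 L2"
    and xy: "x < m1 * m2" "y < m1 * m2"
  shows "(\<lambda>t. tensor_map n1 n2 m1 m2 (Ls1 t) (Ls2 t) X $$ (x, y)) \<longlonglongrightarrow> tensor_map n1 n2 m1 m2 L1 L2 X $$ (x, y)"
proof -
  have "0 < m2" using xy by (cases m2) auto
  then have "x div m2 < m1" "y div m2 < m1" "x mod m2 < m2" "y mod m2 < m2"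
    using xy by (simp_all add: less_mult_imp_div_less)
  then show ?thesis
    unfolding tensor_map_index[OF lin1(1) lin2(1) xy] tensor_map_index[OF lin1(2) lin2(2) xy]
    using lim1 lim2 unfolding lin_maps_tendsto_def by (intro tendsto_intros) auto
qed

lemma score_tendsto:
  assumes lin1: "\<And>t. lin_map n1 m1 (Ls1 t)" "lin_map n1 m1 L1"
    and lin2: "\<And>t. lin_map n2 m2 (Ls2 t)" "lin_map n2 m2 L2"
    and lim1: "lin_maps_tendsto n1 m1 Ls1 L1" and lim2: "lin_maps_tendsto n2 m2 Ls2 L2"
    and P: "\<And>j. j < d \<Longrightarrow> P j \<in> carrier_mat (m1 * m2) (m1 * m2)"
  shows "(\<lambda>t. score n1 n2 m1 m2 d F P (Ls1 t) (Ls2 t)) \<longlonglongrightarrow> score n1 n2 m1 m2 d F P L1 L2"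
proof -
  have expand: "score n1 n2 m1 m2 d F P L1' L2' = Re (\<Sum>j<d. \<Sum>x<m1 * m2. \<Sum>y<m1 * m2.
      tensor_map n1 n2 m1 m2 L1' L2' (F j) $$ (x, y) * P j $$ (y, x))" for L1' L2'
    unfolding score_def
    by (intro arg_cong[where f = Re] sum.cong refl) (simp add: mtrace_mult[OF tensor_map_carrier P])
  show ?thesis
    unfolding expand
    by (intro tendsto_intros tensor_map_tendsto[OF lin1 lin2 lim1 lim2]) auto
qed

lemma score_convergent_subseq:
  fixes Ls Ms :: "nat \<Rightarrow> complex mat \<Rightarrow> complex mat"
  assumes cpu1: "\<And>t. cpu_map n1 m1 (Ls t)" and cpu2: "\<And>t. cpu_map n2 m2 (Ms t)"
    and P: "\<And>j. j < d \<Longrightarrow> P j \<in> carrier_mat (m1 * m2) (m1 * m2)"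
  shows "\<exists>r L1 L2. strict_mono r \<and> cpu_map n1 m1 L1 \<and> cpu_map n2 m2 L2 \<and>
    (\<lambda>t. score n1 n2 m1 m2 d F P (Ls (r t)) (Ms (r t))) \<longlonglongrightarrow> score n1 n2 m1 m2 d F P L1 L2"
proof -
  obtain r1 L1 where r1: "strict_mono r1" "cpu_map n1 m1 L1" "lin_maps_tendsto n1 m1 (Ls \<circ> r1) L1"
    using cpu_maps_convergent_subseq[of n1 m1 Ls] cpu1 by auto
  obtain r2 L2 where r2: "strict_mono r2" "cpu_map n2 m2 L2" "lin_maps_tendsto n2 m2 (Ms \<circ> r1 \<circ> r2) L2"
    using cpu_maps_convergent_subseq[of n2 m2 "Ms \<circ> r1"] cpu2 by auto
  have "(\<lambda>t. score n1 n2 m1 m2 d F P ((Ls \<circ> r1 \<circ> r2) t) ((Ms \<circ> r1 \<circ> r2) t)) \<longlonglongrightarrow>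
      score n1 n2 m1 m2 d F P L1 L2"
    using score_tendsto[OF _ _ _ _ lin_maps_tendsto_subseq[OF r1(3) r2(1)] r2(3) P]
      cpu1 cpu2 r1(2) r2(2) cpu_map_lin_map
    by simp
  then show ?thesis
    using strict_mono_o[OF r1(1) r2(1)] r1(2) r2(2) unfolding comp_def by blast
qed

lemma score_Sup_attained:
  fixes n1 n2 m1 m2 d :: nat and F P :: "nat \<Rightarrow> complex mat"
  defines "S \<equiv> {score n1 n2 m1 m2 d F P L1 L2 | L1 L2. cpu_map n1 m1 L1 \<and> cpu_map n2 m2 L2}"
  assumes P: "\<And>j. j < d \<Longrightarrow> P j \<in> carrier_mat (m1 * m2) (m1 * m2)"
    and ne: "S \<noteq> {}" and bdd: "bdd_above S"
  shows "\<exists>L1 L2. cpu_map n1 m1 L1 \<and> cpu_map n2 m2 L2 \<and> score n1 n2 m1 m2 d F P L1 L2 = Sup S"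
proof -
  let ?score = "score n1 n2 m1 m2 d F P"
  have "\<forall>t. \<exists>L. cpu_map n1 m1 (fst L) \<and> cpu_map n2 m2 (snd L) \<and>
      Sup S - inverse (real (Suc t)) < ?score (fst L) (snd L)"
  proof
    fix t
    obtain s where "s \<in> S" "Sup S - inverse (real (Suc t)) < s"
      using less_cSupD[OF ne, of "Sup S - inverse (real (Suc t))"] by auto
    then show "\<exists>L. cpu_map n1 m1 (fst L) \<and> cpu_map n2 m2 (snd L) \<and>
        Sup S - inverse (real (Suc t)) < ?score (fst L) (snd L)"
      unfolding S_def by force
  qed
  from choice[OF this] obtain Ls where Ls: "\<forall>t. cpu_map n1 m1 (fst (Ls t)) \<and>
      cpu_map n2 m2 (snd (Ls t)) \<and> Sup S - inverse (real (Suc t)) < ?score (fst (Ls t)) (snd (Ls t))"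
    by blast
  define Ls1 Ls2 where "Ls1 = fst \<circ> Ls" and "Ls2 = snd \<circ> Ls"
  have cpu1: "\<And>t. cpu_map n1 m1 (Ls1 t)" and cpu2: "\<And>t. cpu_map n2 m2 (Ls2 t)"
    and close: "\<And>t. Sup S - inverse (real (Suc t)) < ?score (Ls1 t) (Ls2 t)"
    using Ls unfolding Ls1_def Ls2_def by simp_all
  obtain r L1 L2 where r: "strict_mono r" and L: "cpu_map n1 m1 L1" "cpu_map n2 m2 L2"
    and lim: "(\<lambda>t. ?score (Ls1 (r t)) (Ls2 (r t))) \<longlonglongrightarrow> ?score L1 L2"
    using score_convergent_subseq[where Ls = Ls1 and Ms = Ls2 and P = P and F = F, OF cpu1 cpu2 P] by blast
  have "Sup S \<le> ?score L1 L2"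
  proof (rule LIMSEQ_le[OF _ lim])
    show "(\<lambda>t. Sup S - inverse (real (Suc t))) \<longlonglongrightarrow> Sup S"
      using tendsto_diff[OF tendsto_const LIMSEQ_inverse_real_of_nat] by simp
    have "t \<le> r t" for t
      by (rule seq_suble[OF r])
    then have inverse_le: "inverse (real (Suc (r t))) \<le> inverse (real (Suc t))" for t
      by (intro le_imp_inverse_le) auto
    have "Sup S - inverse (real (Suc t)) \<le> ?score (Ls1 (r t)) (Ls2 (r t))" for t
      using close[of "r t"] inverse_le[of t] by linarith
    then show "\<exists>N. \<forall>t\<ge>N. Sup S - inverse (real (Suc t)) \<le> ?score (Ls1 (r t)) (Ls2 (r t))"
      by blast
  qed
  moreover have "?score L1 L2 \<le> Sup S"
    using L unfolding S_def by (intro cSup_upper[OF _ bdd[unfolded S_def]]) blast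
  ultimately show ?thesis
    using L by force
qed

theorem mainTheorem5:
  fixes n1 n2 m1 m2 d :: nat and F P :: "nat \<Rightarrow> complex mat"
  assumes "0 < n1" "0 < n2" "0 < m1" "0 < m2"
    and "projective_measurement (m1 * m2) d P"
    and "povm (n1 * n2) d F"
  shows "Qval n1 n2 m1 m2 d F P \<le> 1 \<and>
    (Qval n1 n2 m1 m2 d F P = 1 \<longrightarrow>
      (\<exists>L1 L2. cpu_map n1 m1 L1 \<and> cpu_map n2 m2 L2 \<and>
         (\<forall>j<d. tensor_map n1 n2 m1 m2 L1 L2 (F j) = P j)))"
proof -
  define S where "S = {score n1 n2 m1 m2 d F P L1 L2 | L1 L2. cpu_map n1 m1 L1 \<and> cpu_map n2 m2 L2}"
  have Qval: "Qval n1 n2 m1 m2 d F P = Sup S / real (m1 * m2)"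
    unfolding Qval_def S_def score_def by simp
  have ne: "S \<noteq> {}"
    unfolding S_def using cpu_map_corner_map[OF assms(1)] cpu_map_corner_map[OF assms(2)] by blast
  have upper: "s \<le> real (m1 * m2)" if "s \<in> S" for s
    using that score_le[OF _ _ assms(5,6)] unfolding S_def by blast
  have "Sup S \<le> real (m1 * m2)"
    by (rule cSup_least[OF ne upper])
  then show ?thesis
  proof (intro conjI impI)
    assume "Qval n1 n2 m1 m2 d F P = 1"
    then have "Sup S = real (m1 * m2)"
      using assms(3,4) unfolding Qval by simp
    moreover obtain L1 L2 where "cpu_map n1 m1 L1" "cpu_map n2 m2 L2" "score n1 n2 m1 m2 d F P L1 L2 = Sup S"
      using score_Sup_attained[OF _ ne[unfolded S_def] bdd_aboveI[OF upper, unfolded S_def]]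
        projective_measurement_projection[OF assms(5)]
      unfolding projection_def S_def by blast
    ultimately show "\<exists>L1 L2. cpu_map n1 m1 L1 \<and> cpu_map n2 m2 L2 \<and>
        (\<forall>j<d. tensor_map n1 n2 m1 m2 L1 L2 (F j) = P j)"
      using score_eq_imp_tensor_map_eq[OF _ _ assms(5,6)] by metis
  qed (use assms(3,4) Qval in simp)
qed

end
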